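(* Let $G$ be a simple directed graph and $\sigma$ a set of its nodes. If $\sigma$ contains a clique of size $|\sigma|-1$ and $\sigma$ is not a clique, then $\sigma$ is not a stable motif (for any CTLN $W(G,\varepsilon,\delta)$ with legal parameters).
   Context: A clique is a set of nodes pairwise bidirectionally connected. Legal parameters: $\delta>0$, $0<\varepsilon<\frac{\delta}{\delta+1}$. $W=W(G,\varepsilon,\delta)$ has $W_{ii}=0$, $W_{ij}=-1+\varepsilon$ if $j\to i$, $W_{ij}=-1-\delta$ if $i\ne j$, $j\not\to i$; dynamics $\dot x_i=-x_i+[\sum_jW_{ij}x_j+\theta]_+$, $\theta>0$; CTLNs assumed nondegenerate ($\det(I-W_\sigma)\neq0$, Cramer determinants nonzero). $W_\sigma$ is the principal submatrix on $\sigma$. $\sigma$ is a permitted motif if $\theta(I-W_\sigma)^{-1}1_\sigma$ has all entries positive; a stable motif if permitted and all eigenvalues of $I-W_\sigma$ have positive real part. *)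

theory Defs
  imports "Jordan_Normal_Form.Matrix" "Jordan_Normal_Form.DL_Submatrix"
          "Jordan_Normal_Form.Char_Poly" "Jordan_Normal_Form.Determinant"
begin

(* Nodes of a graph on n nodes are 0..n-1.  E j i means the edge j -> i.
   A simple directed graph: no self-loops (at most one edge per ordered pair
   is automatic for a relation). *)
definition simple_digraph :: "nat \<Rightarrow> (nat \<Rightarrow> nat \<Rightarrow> bool) \<Rightarrow> bool" where
  "simple_digraph n E \<longleftrightarrow> (\<forall>i. \<not> E i i)"

definition is_clique :: "(nat \<Rightarrow> nat \<Rightarrow> bool) \<Rightarrow> nat set \<Rightarrow> bool" where
  "is_clique E K \<longleftrightarrow> (\<forall>i\<in>K. \<forall>j\<in>K. i \<noteq> j \<longrightarrow> E i j \<and> E j i)"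

definition legal_params :: "real \<Rightarrow> real \<Rightarrow> bool" where
  "legal_params \<epsilon> \<delta> \<longleftrightarrow> \<delta> > 0 \<and> 0 < \<epsilon> \<and> \<epsilon> < \<delta> / (\<delta> + 1)"

definition ctln_W :: "nat \<Rightarrow> (nat \<Rightarrow> nat \<Rightarrow> bool) \<Rightarrow> real \<Rightarrow> real \<Rightarrow> real mat" where
  "ctln_W n E \<epsilon> \<delta> = mat n n (\<lambda>(i,j). if i = j then 0
                                      else if E j i then -1 + \<epsilon> else -1 - \<delta>)"

definition I_minus_W_sub :: "real mat \<Rightarrow> nat set \<Rightarrow> real mat" where
  "I_minus_W_sub W \<sigma> = 1\<^sub>m (dim_row (submatrix W \<sigma> \<sigma>)) - submatrix W \<sigma> \<sigma>"

definition cramer_mat :: "real mat \<Rightarrow> nat \<Rightarrow> real mat" where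
  "cramer_mat M i = mat (dim_row M) (dim_col M) (\<lambda>(r,c). if c = i then 1 else M $$ (r,c))"

definition nondegenerate :: "nat \<Rightarrow> real mat \<Rightarrow> bool" where
  "nondegenerate n W \<longleftrightarrow>
     (\<forall>\<tau>. \<tau> \<subseteq> {..<n} \<and> \<tau> \<noteq> {} \<longrightarrow>
        det (I_minus_W_sub W \<tau>) \<noteq> 0 \<and>
        (\<forall>i < card \<tau>. det (cramer_mat (I_minus_W_sub W \<tau>) i) \<noteq> 0))"

definition permitted_motif :: "real mat \<Rightarrow> real \<Rightarrow> nat set \<Rightarrow> bool" where
  "permitted_motif W \<theta> \<sigma> \<longleftrightarrow>
     (let M = I_minus_W_sub W \<sigma>; m = dim_row M in
      \<exists>B \<in> carrier_mat m m. M * B = 1\<^sub>m m \<and> B * M = 1\<^sub>m m \<and>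
        (\<forall>i < m. (\<theta> \<cdot>\<^sub>v (B *\<^sub>v vec m (\<lambda>_. 1))) $ i > 0))"

definition stable_motif :: "real mat \<Rightarrow> real \<Rightarrow> nat set \<Rightarrow> bool" where
  "stable_motif W \<theta> \<sigma> \<longleftrightarrow>
     permitted_motif W \<theta> \<sigma> \<and>
     (\<forall>z::complex. eigenvalue (map_mat complex_of_real (I_minus_W_sub W \<sigma>)) z \<longrightarrow> Re z > 0)"

end

theory Submission
  imports Defs
begin

text \<open>Split off the row and column of a node \<open>v\<close> with \<open>\<sigma> - {v}\<close> a clique: on the clique block
  \<open>M = I - W\<^sub>\<sigma>\<close> is \<open>\<epsilon> I + (1 - \<epsilon>) J\<close>, and the border entries are \<open>1 - \<epsilon>\<close> or \<open>1 + \<delta>\<close>.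
  Adding up the equations of \<open>M x = 1\<close> over the block, plainly and weighted by the border row,
  shows that for a positive solution \<open>x\<close>, \<open>det M\<close> has the sign of \<open>\<epsilon> + (1 - \<epsilon>) |\<sigma> - {v}|\<close>
  minus the sum of the border row. If some clique node has no edge into \<open>v\<close>, this is negative,
  and the intermediate value theorem applied to the Schur complement yields an explicit
  negative eigenvalue, so \<open>\<sigma>\<close> is not stable. Otherwise \<open>v\<close> has no edge to the node \<open>u\<close> not joined
  to it both ways, and the equations for \<open>u\<close> and \<open>v\<close> alone contradict positivity of \<open>x\<close>.\<close>

locale clique_bordered_matrix =
  fixes M :: "real mat" and k p :: nat and \<epsilon> :: real
  assumes carrier: "M \<in> carrier_mat k k"
    and border_index: "p < k"
    and border_diag: "M $$ (p, p) = 1"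
    and clique_block: "\<And>i j. i < k \<Longrightarrow> j < k \<Longrightarrow> i \<noteq> p \<Longrightarrow> j \<noteq> p \<Longrightarrow>
                         M $$ (i, j) = (if i = j then 1 else 1 - \<epsilon>)"
    and eps_pos: "0 < \<epsilon>" and eps_le_one: "\<epsilon> \<le> 1"
begin

definition K :: "nat set" where "K = {..<k} - {p}"

definition col_sum :: real where "col_sum = (\<Sum>i\<in>K. M $$ (i, p))"

definition row_sum :: real where "row_sum = (\<Sum>j\<in>K. M $$ (p, j))"

definition cross_sum :: real where "cross_sum = (\<Sum>j\<in>K. M $$ (p, j) * M $$ (j, p))"

definition \<mu> :: real where "\<mu> = (1 - \<epsilon>) * card K + \<epsilon>"

text \<open>The Schur complement of the clique block \<open>(\<epsilon> + t) I + (1 - \<epsilon>) J\<close> gives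
  \<open>det (M + t I) = - (\<epsilon> + t)^(|K| - 2) * schur_fun t\<close>: so \<open>schur_fun 0 > 0\<close> means \<open>det M < 0\<close>,
  and a root \<open>t > -\<epsilon>\<close> of \<open>schur_fun\<close> gives the eigenvalue \<open>-t\<close>.\<close>
definition schur_fun :: "real \<Rightarrow> real" where
  "schur_fun t = - (1 - \<epsilon>) * col_sum * row_sum + (\<mu> + t) * (cross_sum - (1 + t) * (\<epsilon> + t))"

lemma finite_K: "finite K" and mem_K: "j \<in> K \<longleftrightarrow> j < k \<and> j \<noteq> p"
  unfolding K_def by auto

lemma mu_pos: "\<mu> > 0"
  unfolding \<mu>_def using eps_pos eps_le_one by (simp add: add_nonneg_pos)

lemma mult_vec_clique_row:
  assumes w: "w \<in> carrier_vec k" and i: "i \<in> K"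
  shows "(M *\<^sub>v w) $ i = \<epsilon> * w $ i + (1 - \<epsilon>) * (\<Sum>j\<in>K. w $ j) + M $$ (i, p) * w $ p"
proof -
  have "(M *\<^sub>v w) $ i = (\<Sum>j<k. M $$ (i, j) * w $ j)"
    using carrier w i by (auto simp: mem_K mult_mat_vec_def scalar_prod_def lessThan_atLeast0 intro!: sum.cong)
  also have "\<dots> = M $$ (i, p) * w $ p + (\<Sum>j\<in>K. M $$ (i, j) * w $ j)"
    using border_index by (simp add: K_def sum.remove)
  also have "(\<Sum>j\<in>K. M $$ (i, j) * w $ j) = (\<Sum>j\<in>K. (1 - \<epsilon>) * w $ j + (if j = i then \<epsilon> * w $ j else 0))"
    using i by (intro sum.cong) (auto simp: mem_K clique_block algebra_simps)
  also have "\<dots> = (1 - \<epsilon>) * (\<Sum>j\<in>K. w $ j) + \<epsilon> * w $ i"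
    using i finite_K by (simp add: sum.distrib sum_distrib_left)
  finally show ?thesis by simp
qed

lemma mult_vec_border_row:
  assumes w: "w \<in> carrier_vec k"
  shows "(M *\<^sub>v w) $ p = (\<Sum>j\<in>K. M $$ (p, j) * w $ j) + w $ p"
proof -
  have "(M *\<^sub>v w) $ p = (\<Sum>j<k. M $$ (p, j) * w $ j)"
    using carrier w border_index by (auto simp: mult_mat_vec_def scalar_prod_def lessThan_atLeast0 intro!: sum.cong)
  also have "\<dots> = M $$ (p, p) * w $ p + (\<Sum>j\<in>K. M $$ (p, j) * w $ j)"
    using border_index by (simp add: K_def sum.remove)
  finally show ?thesis using border_diag by simp
qed

lemma solution_clique_row:
  assumes x: "x \<in> carrier_vec k" "M *\<^sub>v x = vec k (\<lambda>_. 1)" and i: "i \<in> K"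
  shows "\<epsilon> * x $ i + (1 - \<epsilon>) * (\<Sum>j\<in>K. x $ j) + M $$ (i, p) * x $ p = 1"
  using mult_vec_clique_row[OF x(1) i] x(2) i by (simp add: mem_K)

lemma solution_border_row:
  assumes x: "x \<in> carrier_vec k" "M *\<^sub>v x = vec k (\<lambda>_. 1)"
  shows "(\<Sum>j\<in>K. M $$ (p, j) * x $ j) + x $ p = 1"
  using mult_vec_border_row[OF x(1)] x(2) border_index by simp

lemma border_column_entry_lt_one:
  assumes x: "x \<in> carrier_vec k" "M *\<^sub>v x = vec k (\<lambda>_. 1)" "0 < x $ i" "0 < x $ p"
    and border_row: "\<And>j. j \<in> K \<Longrightarrow> M $$ (p, j) = 1 - \<epsilon>" and i: "i \<in> K"
  shows "M $$ (i, p) < 1"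
proof -
  have "(\<Sum>j\<in>K. M $$ (p, j) * x $ j) = (1 - \<epsilon>) * (\<Sum>j\<in>K. x $ j)"
    using border_row by (simp add: sum_distrib_left)
  then have "\<epsilon> * x $ i + (M $$ (i, p) - 1) * x $ p = 0"
    using solution_clique_row[OF x(1,2) i] solution_border_row[OF x(1,2)] by (simp add: algebra_simps)
  then have "(M $$ (i, p) - 1) * x $ p < 0"
    using eps_pos x(3) by (smt (verit) mult_pos_pos)
  then show ?thesis using x(4) by (simp add: mult_less_0_iff)
qed

lemma schur_fun_zero_solution:
  assumes x: "x \<in> carrier_vec k" "M *\<^sub>v x = vec k (\<lambda>_. 1)"
  shows "schur_fun 0 * x $ p = \<epsilon> * (row_sum - \<mu>)"
proof -
  define s y where "s = (\<Sum>j\<in>K. x $ j)" and "y = x $ p"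
  note row = solution_clique_row[OF x, folded s_def y_def]
  have "(\<Sum>i\<in>K. \<epsilon> * x $ i + (1 - \<epsilon>) * s + M $$ (i, p) * y) = (\<Sum>i\<in>K. 1)"
    using row by (rule sum.cong[OF refl])
  then have sum_rows: "\<epsilon> * s + card K * ((1 - \<epsilon>) * s) + col_sum * y = card K"
    unfolding col_sum_def by (simp add: sum.distrib sum_distrib_left sum_distrib_right s_def)
  have "(\<Sum>i\<in>K. M $$ (p, i) * (\<epsilon> * x $ i + (1 - \<epsilon>) * s + M $$ (i, p) * y)) = (\<Sum>i\<in>K. M $$ (p, i))"
    using row by (intro sum.cong) auto
  also have "(\<Sum>i\<in>K. M $$ (p, i) * (\<epsilon> * x $ i + (1 - \<epsilon>) * s + M $$ (i, p) * y)) =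
      (\<Sum>i\<in>K. \<epsilon> * (M $$ (p, i) * x $ i) + (1 - \<epsilon>) * s * M $$ (p, i) + y * (M $$ (p, i) * M $$ (i, p)))"
    by (simp add: algebra_simps)
  finally have "\<epsilon> * (\<Sum>i\<in>K. M $$ (p, i) * x $ i) + row_sum * ((1 - \<epsilon>) * s) + cross_sum * y = row_sum"
    unfolding row_sum_def cross_sum_def
    by (simp add: sum.distrib sum_distrib_left sum_distrib_right[symmetric] mult.commute)
  moreover have "(\<Sum>i\<in>K. M $$ (p, i) * x $ i) = 1 - y"
    using solution_border_row[OF x] unfolding y_def by simp
  ultimately have weighted_sum_rows: "\<epsilon> * (1 - y) + row_sum * ((1 - \<epsilon>) * s) + cross_sum * y = row_sum"
    by simp
  have "schur_fun 0 * y - \<epsilon> * (row_sum - \<mu>) =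
      \<mu> * (\<epsilon> * (1 - y) + row_sum * ((1 - \<epsilon>) * s) + cross_sum * y - row_sum)
      - (1 - \<epsilon>) * row_sum * (\<epsilon> * s + card K * ((1 - \<epsilon>) * s) + col_sum * y - card K)"
    unfolding schur_fun_def \<mu>_def by (simp add: algebra_simps)
  then show ?thesis
    using sum_rows weighted_sum_rows unfolding y_def by simp
qed

lemma schur_fun_positive_root:
  assumes pos0: "schur_fun 0 > 0" and sums: "0 \<le> col_sum * row_sum"
  obtains t where "t > 0" "schur_fun t = 0"
proof -
  define T where "T = \<bar>cross_sum\<bar> + 1"
  have "cross_sum < T * T"
    unfolding T_def by (smt (verit) abs_ge_self mult_le_cancel_left1)
  also have "T * T \<le> (1 + T) * (\<epsilon> + T)"
    unfolding T_def using eps_pos by (intro mult_mono) auto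
  finally have "(\<mu> + T) * (cross_sum - (1 + T) * (\<epsilon> + T)) < 0"
    using mu_pos unfolding T_def by (intro mult_pos_neg) auto
  moreover have "0 \<le> (1 - \<epsilon>) * (col_sum * row_sum)"
    using eps_le_one sums by simp
  ultimately have "schur_fun T < 0"
    unfolding schur_fun_def by (simp add: algebra_simps)
  moreover have "continuous_on {0..T} schur_fun"
    unfolding schur_fun_def by (intro continuous_intros)
  ultimately obtain t where t: "0 \<le> t" "t \<le> T" "schur_fun t = 0"
    using IVT2'[of schur_fun T 0 0] pos0 unfolding T_def by auto
  with pos0 have "t > 0" by (cases "t = 0") auto
  with t show thesis by (intro that)
qed

lemma eigenvalue_of_schur_root:
  assumes t: "- \<epsilon> < t" and root: "schur_fun t = 0"
  shows "eigenvalue M (- t)"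
proof -
  have mu_t: "\<mu> + t > 0"
    using t eps_le_one unfolding \<mu>_def by (simp add: add_nonneg_pos add.assoc)
  define \<alpha> where "\<alpha> = - (1 - \<epsilon>) * col_sum / (\<mu> + t)"
  define z where "z = vec k (\<lambda>j. if j = p then - (\<epsilon> + t) else \<alpha> + M $$ (j, p))"
  have \<alpha>: "(\<mu> + t) * \<alpha> = - (1 - \<epsilon>) * col_sum"
    unfolding \<alpha>_def using mu_t by simp
  have border_eq: "row_sum * \<alpha> + cross_sum = (1 + t) * (\<epsilon> + t)"
  proof -
    have "(\<mu> + t) * (row_sum * \<alpha> + cross_sum - (1 + t) * (\<epsilon> + t)) =
        row_sum * ((\<mu> + t) * \<alpha>) + (\<mu> + t) * (cross_sum - (1 + t) * (\<epsilon> + t))"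
      by (simp add: algebra_simps)
    also have "\<dots> = schur_fun t"
      unfolding \<alpha> schur_fun_def by simp
    finally have "(\<mu> + t) * (row_sum * \<alpha> + cross_sum - (1 + t) * (\<epsilon> + t)) = 0"
      using root by simp
    then show ?thesis using mu_t by simp
  qed
  have z: "z \<in> carrier_vec k" unfolding z_def by simp
  have z_K: "z $ j = \<alpha> + M $$ (j, p)" if "j \<in> K" for j
    using that unfolding z_def mem_K by simp
  have z_p: "z $ p = - (\<epsilon> + t)"
    unfolding z_def using border_index by simp
  have "M *\<^sub>v z = (- t) \<cdot>\<^sub>v z"
  proof (rule eq_vecI)
    fix i assume "i < dim_vec ((- t) \<cdot>\<^sub>v z)"
    then have i: "i < k" using z by simp
    show "(M *\<^sub>v z) $ i = ((- t) \<cdot>\<^sub>v z) $ i"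
    proof (cases "i = p")
      case True
      have "(\<Sum>j\<in>K. M $$ (p, j) * z $ j) = (\<Sum>j\<in>K. \<alpha> * M $$ (p, j) + M $$ (p, j) * M $$ (j, p))"
        using z_K by (simp add: algebra_simps)
      also have "\<dots> = row_sum * \<alpha> + cross_sum"
        unfolding row_sum_def cross_sum_def by (simp add: sum.distrib sum_distrib_left mult.commute)
      finally have "(M *\<^sub>v z) $ p = (1 + t) * (\<epsilon> + t) - (\<epsilon> + t)"
        using mult_vec_border_row[OF z] z_p border_eq by simp
      then show ?thesis
        using True i z by (simp add: z_p algebra_simps)
    next
      case False
      then have iK: "i \<in> K" using i mem_K by simp
      have "(\<Sum>j\<in>K. z $ j) = card K * \<alpha> + col_sum"
        unfolding col_sum_def using z_K by (simp add: sum.distrib)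
      then have "(M *\<^sub>v z) $ i = ((\<mu> + t) * \<alpha> + (1 - \<epsilon>) * col_sum) - t * z $ i"
        using mult_vec_clique_row[OF z iK] z_K[OF iK] z_p unfolding \<mu>_def by (simp add: algebra_simps)
      then show ?thesis using \<alpha> i z by (simp add: algebra_simps)
    qed
  qed (use carrier z in simp)
  moreover have "z \<noteq> 0\<^sub>v k"
    using z_p t eps_pos border_index by auto
  ultimately show ?thesis
    unfolding eigenvalue_def eigenvector_def using carrier z by auto
qed

lemma negative_eigenvalue:
  assumes x: "x \<in> carrier_vec k" "M *\<^sub>v x = vec k (\<lambda>_. 1)" "0 < x $ p"
    and border_col: "\<And>i. i \<in> K \<Longrightarrow> 0 \<le> M $$ (i, p)"
    and border_row: "\<And>j. j \<in> K \<Longrightarrow> 1 - \<epsilon> \<le> M $$ (p, j)"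
    and w: "w \<in> K" "1 < M $$ (p, w)"
  obtains t where "t > 0" "eigenvalue M (- t)"
proof -
  have "row_sum - (1 - \<epsilon>) * card K = (\<Sum>j\<in>K. M $$ (p, j) - (1 - \<epsilon>))"
    unfolding row_sum_def by (simp add: sum_subtractf)
  also have "\<dots> \<ge> M $$ (p, w) - (1 - \<epsilon>)"
    using border_row finite_K w(1) by (intro member_le_sum) auto
  finally have "row_sum > \<mu>"
    using w(2) unfolding \<mu>_def by simp
  then have "schur_fun 0 > 0"
    using schur_fun_zero_solution[OF x(1,2)] x(3) eps_pos by (smt (verit) mult_pos_pos zero_less_mult_iff)
  moreover have "0 \<le> col_sum * row_sum"
    using border_col \<open>row_sum > \<mu>\<close> mu_pos unfolding col_sum_def by (simp add: sum_nonneg)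
  ultimately obtain t where "t > 0" "schur_fun t = 0"
    by (rule schur_fun_positive_root)
  with eps_pos show thesis
    by (intro that eigenvalue_of_schur_root) auto
qed

lemma negative_eigenvalue_of_missing_edge:
  assumes x: "x \<in> carrier_vec k" "M *\<^sub>v x = vec k (\<lambda>_. 1)" "\<And>i. i < k \<Longrightarrow> 0 < x $ i"
    and \<delta>: "0 < \<delta>"
    and border: "\<And>j. j \<in> K \<Longrightarrow> M $$ (p, j) \<in> {1 - \<epsilon>, 1 + \<delta>} \<and> M $$ (j, p) \<in> {1 - \<epsilon>, 1 + \<delta>}"
    and missing_edge: "q \<in> K" "M $$ (p, q) \<noteq> 1 - \<epsilon> \<or> M $$ (q, p) \<noteq> 1 - \<epsilon>"
  obtains t where "t > 0" "eigenvalue M (- t)"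
proof (cases "\<exists>w\<in>K. M $$ (p, w) = 1 + \<delta>")
  case True
  then obtain w where "w \<in> K" "1 < M $$ (p, w)" using \<delta> by auto
  moreover have "\<And>j. j \<in> K \<Longrightarrow> 0 \<le> M $$ (j, p) \<and> 1 - \<epsilon> \<le> M $$ (p, j)"
    using border eps_pos eps_le_one \<delta> by fastforce
  ultimately show thesis
    using that x border_index by (elim negative_eigenvalue) auto
next
  case False
  then have border_row: "\<And>j. j \<in> K \<Longrightarrow> M $$ (p, j) = 1 - \<epsilon>" using border by blast
  then have "M $$ (q, p) < 1"
    using x border_index missing_edge(1) by (intro border_column_entry_lt_one) (auto simp: mem_K)
  then have False
    using border_row[of q] border[of q] missing_edge \<delta> by auto
  then show thesis ..
qed

end

lemma legal_params_bounds:
  assumes "legal_params \<epsilon> \<delta>"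
  shows "0 < \<epsilon>" "\<epsilon> < 1" "0 < \<delta>"
proof -
  have "\<delta> / (\<delta> + 1) < 1" using assms unfolding legal_params_def by simp
  then show "0 < \<epsilon>" "\<epsilon> < 1" "0 < \<delta>" using assms unfolding legal_params_def by linarith+
qed

lemma almost_clique_missing_edge:
  assumes fin: "finite \<sigma>" and "\<exists>K \<subseteq> \<sigma>. card K = card \<sigma> - 1 \<and> is_clique E K"
    and not_clique: "\<not> is_clique E \<sigma>"
  obtains v u where "v \<in> \<sigma>" "is_clique E (\<sigma> - {v})" "u \<in> \<sigma> - {v}" "\<not> (E u v \<and> E v u)"
proof -
  obtain K where K: "K \<subseteq> \<sigma>" "card K = card \<sigma> - 1" "is_clique E K"
    using assms(2) by blast
  have "\<sigma> \<noteq> {}" using not_clique unfolding is_clique_def by auto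
  then have "card \<sigma> > 0" using fin by (simp add: card_gt_0_iff)
  then have "K \<noteq> \<sigma>" using K(2) by auto
  then obtain v where v: "v \<in> \<sigma>" "v \<notin> K" using K(1) by auto
  have "K \<subseteq> \<sigma> - {v}" using K(1) v(2) by auto
  moreover have "card (\<sigma> - {v}) = card K" using K(2) v(1) fin by simp
  ultimately have K_eq: "K = \<sigma> - {v}" using fin by (intro card_subset_eq) auto
  have "\<exists>u \<in> \<sigma> - {v}. \<not> (E u v \<and> E v u)"
  proof (rule ccontr)
    assume "\<not> ?thesis"
    then have "is_clique E \<sigma>"
      using K(3) unfolding K_eq is_clique_def by (metis Diff_iff singletonD)
    with not_clique show False ..
  qed
  with v(1) K(3) K_eq show thesis by (auto intro: that)
qed

lemma card_less_lt_card:
  fixes \<sigma> :: "'a :: preorder set"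
  assumes "finite \<sigma>" and "v \<in> \<sigma>"
  shows "card {a\<in>\<sigma>. a < v} < card \<sigma>"
  using assms by (intro psubset_card_mono) auto

lemma card_less_eq_card_less_iff:
  fixes \<sigma> :: "nat set"
  assumes "u \<in> \<sigma>" and "v \<in> \<sigma>"
  shows "card {a\<in>\<sigma>. a < u} = card {a\<in>\<sigma>. a < v} \<longleftrightarrow> u = v"
  using pick_card_in_set[OF assms(1)] pick_card_in_set[OF assms(2)] by metis

lemma
  assumes "\<sigma> \<subseteq> {..<n}"
  shows I_minus_W_sub_ctln_W_carrier: "I_minus_W_sub (ctln_W n E \<epsilon> \<delta>) \<sigma> \<in> carrier_mat (card \<sigma>) (card \<sigma>)"
    and I_minus_W_sub_ctln_W_index: "i < card \<sigma> \<Longrightarrow> j < card \<sigma> \<Longrightarrow>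
      I_minus_W_sub (ctln_W n E \<epsilon> \<delta>) \<sigma> $$ (i, j) =
        (if i = j then 1 else if E (pick \<sigma> j) (pick \<sigma> i) then 1 - \<epsilon> else 1 + \<delta>)"
proof -
  let ?W = "ctln_W n E \<epsilon> \<delta>"
  have rows: "{i. i < dim_row ?W \<and> i \<in> \<sigma>} = \<sigma>" and cols: "{i. i < dim_col ?W \<and> i \<in> \<sigma>} = \<sigma>"
    using assms unfolding ctln_W_def by auto
  then have "submatrix ?W \<sigma> \<sigma> \<in> carrier_mat (card \<sigma>) (card \<sigma>)"
    by (intro carrier_matI) (simp_all add: dim_submatrix)
  then show "I_minus_W_sub ?W \<sigma> \<in> carrier_mat (card \<sigma>) (card \<sigma>)"
    unfolding I_minus_W_sub_def by auto
  assume i: "i < card \<sigma>" and j: "j < card \<sigma>"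
  have "pick \<sigma> i < n" "pick \<sigma> j < n"
    using pick_in_set_le[OF i] pick_in_set_le[OF j] assms by auto
  moreover have "pick \<sigma> i = pick \<sigma> j \<longleftrightarrow> i = j"
    using i j pick_mono_le by (metis nat_neq_iff)
  ultimately show "I_minus_W_sub ?W \<sigma> $$ (i, j) =
      (if i = j then 1 else if E (pick \<sigma> j) (pick \<sigma> i) then 1 - \<epsilon> else 1 + \<delta>)"
    using i j rows cols unfolding I_minus_W_sub_def
    by (simp add: dim_submatrix submatrix_index ctln_W_def)
qed

lemma I_minus_W_sub_ctln_W_off_diagonal:
  assumes "\<sigma> \<subseteq> {..<n}" "i < card \<sigma>" "j < card \<sigma>" "i \<noteq> j"
  shows "I_minus_W_sub (ctln_W n E \<epsilon> \<delta>) \<sigma> $$ (i, j) \<in> {1 - \<epsilon>, 1 + \<delta>}"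
  using I_minus_W_sub_ctln_W_index[OF assms(1-3)] assms(4) by simp

lemma I_minus_W_sub_ctln_W_missing_edge:
  assumes \<sigma>: "\<sigma> \<subseteq> {..<n}" and uv: "u \<in> \<sigma>" "v \<in> \<sigma>" "\<not> (E u v \<and> E v u)"
    and "0 < \<epsilon>" "0 < \<delta>"
  defines "M \<equiv> I_minus_W_sub (ctln_W n E \<epsilon> \<delta>) \<sigma>"
    and "p \<equiv> card {a\<in>\<sigma>. a < v}" and "q \<equiv> card {a\<in>\<sigma>. a < u}"
  shows "M $$ (p, q) \<noteq> 1 - \<epsilon> \<or> M $$ (q, p) \<noteq> 1 - \<epsilon>"
proof -
  have "finite \<sigma>" using \<sigma> finite_subset by blast
  then have "p < card \<sigma>" "q < card \<sigma>"
    unfolding p_def q_def using uv card_less_lt_card by auto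
  moreover have "pick \<sigma> p = v" "pick \<sigma> q = u"
    unfolding p_def q_def using uv by (simp_all add: pick_card_in_set)
  ultimately show ?thesis
    using I_minus_W_sub_ctln_W_index[OF \<sigma>] uv assms(5,6) unfolding M_def by auto
qed

lemma ctln_clique_bordered_matrix:
  assumes \<sigma>: "\<sigma> \<subseteq> {..<n}" and v: "v \<in> \<sigma>" and clique: "is_clique E (\<sigma> - {v})"
    and \<epsilon>: "0 < \<epsilon>" "\<epsilon> \<le> 1"
  shows "clique_bordered_matrix (I_minus_W_sub (ctln_W n E \<epsilon> \<delta>) \<sigma>) (card \<sigma>) (card {a\<in>\<sigma>. a < v}) \<epsilon>"
proof -
  have p: "card {a\<in>\<sigma>. a < v} < card \<sigma>"
    using \<sigma> v finite_subset card_less_lt_card by blast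
  show ?thesis
  proof
    fix i j assume ij: "i < card \<sigma>" "j < card \<sigma>" "i \<noteq> card {a\<in>\<sigma>. a < v}" "j \<noteq> card {a\<in>\<sigma>. a < v}"
    have "pick \<sigma> i \<noteq> v" "pick \<sigma> j \<noteq> v"
      using card_pick_le[OF ij(1)] card_pick_le[OF ij(2)] ij(3,4) by auto
    then have "pick \<sigma> i \<in> \<sigma> - {v}" "pick \<sigma> j \<in> \<sigma> - {v}"
      using pick_in_set_le ij by auto
    moreover have "pick \<sigma> i = pick \<sigma> j \<longleftrightarrow> i = j"
      using ij pick_mono_le by (metis nat_neq_iff)
    ultimately show "I_minus_W_sub (ctln_W n E \<epsilon> \<delta>) \<sigma> $$ (i, j) = (if i = j then 1 else 1 - \<epsilon>)"
      using clique ij I_minus_W_sub_ctln_W_index[OF \<sigma>] unfolding is_clique_def by auto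
  next
    show "I_minus_W_sub (ctln_W n E \<epsilon> \<delta>) \<sigma> $$ (card {a\<in>\<sigma>. a < v}, card {a\<in>\<sigma>. a < v}) = 1"
      using I_minus_W_sub_ctln_W_index[OF \<sigma> p p] by simp
  qed (use \<epsilon> p I_minus_W_sub_ctln_W_carrier[OF \<sigma>] in auto)
qed

lemma permitted_motif_positive_solution:
  assumes "permitted_motif W \<theta> \<sigma>" and "0 < \<theta>" and M: "I_minus_W_sub W \<sigma> \<in> carrier_mat m m"
  obtains x where "x \<in> carrier_vec m" "I_minus_W_sub W \<sigma> *\<^sub>v x = vec m (\<lambda>_. 1)" "\<And>i. i < m \<Longrightarrow> 0 < x $ i"
proof -
  from assms(1) obtain B where B: "B \<in> carrier_mat m m" "I_minus_W_sub W \<sigma> * B = 1\<^sub>m m"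
      "\<And>i. i < m \<Longrightarrow> 0 < (\<theta> \<cdot>\<^sub>v (B *\<^sub>v vec m (\<lambda>_. 1))) $ i"
    unfolding permitted_motif_def Let_def using M by auto
  define x where "x = B *\<^sub>v vec m (\<lambda>_. 1)"
  show thesis
  proof
    show x: "x \<in> carrier_vec m" unfolding x_def using B by simp
    show "I_minus_W_sub W \<sigma> *\<^sub>v x = vec m (\<lambda>_. 1)"
      unfolding x_def using B M by (simp add: assoc_mult_mat_vec[symmetric])
    fix i assume "i < m"
    then have "0 < (\<theta> \<cdot>\<^sub>v x) $ i"
      unfolding x_def by (rule B(3))
    then have "0 < \<theta> * x $ i"
      using x \<open>i < m\<close> by simp
    then show "0 < x $ i"
      using assms(2) by (simp add: zero_less_mult_iff)
  qed
qed

lemma stable_motif_real_eigenvalue_pos: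
  assumes "stable_motif W \<theta> \<sigma>" and M: "I_minus_W_sub W \<sigma> \<in> carrier_mat m m"
    and "eigenvalue (I_minus_W_sub W \<sigma>) c"
  shows "0 < c"
proof -
  have "eigenvalue (map_mat complex_of_real (I_minus_W_sub W \<sigma>)) (complex_of_real c)"
    using of_real_hom.eigenvalue_hom[OF M assms(3)] .
  then show ?thesis using assms(1) unfolding stable_motif_def by fastforce
qed

theorem proposition2:
  fixes n :: nat and E :: "nat \<Rightarrow> nat \<Rightarrow> bool" and \<sigma> :: "nat set"
    and \<epsilon> \<delta> \<theta> :: real
  assumes "simple_digraph n E"
    and "\<sigma> \<subseteq> {..<n}"
    and "legal_params \<epsilon> \<delta>"
    and "\<theta> > 0"
    and "nondegenerate n (ctln_W n E \<epsilon> \<delta>)"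
    and "\<exists>K \<subseteq> \<sigma>. card K = card \<sigma> - 1 \<and> is_clique E K"
    and "\<not> is_clique E \<sigma>"
  shows "\<not> stable_motif (ctln_W n E \<epsilon> \<delta>) \<theta> \<sigma>"
proof
  let ?M = "I_minus_W_sub (ctln_W n E \<epsilon> \<delta>) \<sigma>"
  assume stable: "stable_motif (ctln_W n E \<epsilon> \<delta>) \<theta> \<sigma>"
  note \<epsilon>\<delta> = legal_params_bounds[OF assms(3)]
  note M = I_minus_W_sub_ctln_W_carrier[OF assms(2)]
  have "finite \<sigma>" using assms(2) finite_subset by blast
  then obtain v u where v: "v \<in> \<sigma>" "is_clique E (\<sigma> - {v})" and u: "u \<in> \<sigma> - {v}" "\<not> (E u v \<and> E v u)"
    using assms(6,7) by (rule almost_clique_missing_edge)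
  define p q where "p = card {a\<in>\<sigma>. a < v}" and "q = card {a\<in>\<sigma>. a < u}"
  interpret clique_bordered_matrix ?M "card \<sigma>" p \<epsilon>
    unfolding p_def using ctln_clique_bordered_matrix[OF assms(2) v] \<epsilon>\<delta> by simp
  have "q \<in> K"
    using u(1) v(1) \<open>finite \<sigma>\<close> unfolding mem_K
    by (simp add: p_def q_def card_less_lt_card card_less_eq_card_less_iff)
  obtain x where "x \<in> carrier_vec (card \<sigma>)" "?M *\<^sub>v x = vec (card \<sigma>) (\<lambda>_. 1)" "\<And>i. i < card \<sigma> \<Longrightarrow> 0 < x $ i"
    using permitted_motif_positive_solution stable assms(4) M unfolding stable_motif_def by blast
  then obtain t where "t > 0" "eigenvalue ?M (- t)"
  proof (rule negative_eigenvalue_of_missing_edge)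
    show "?M $$ (p, q) \<noteq> 1 - \<epsilon> \<or> ?M $$ (q, p) \<noteq> 1 - \<epsilon>"
      unfolding p_def q_def using I_minus_W_sub_ctln_W_missing_edge assms(2) u v(1) \<epsilon>\<delta> by blast
  next
    fix j assume "j \<in> K"
    then show "?M $$ (p, j) \<in> {1 - \<epsilon>, 1 + \<delta>} \<and> ?M $$ (j, p) \<in> {1 - \<epsilon>, 1 + \<delta>}"
      using I_minus_W_sub_ctln_W_off_diagonal[OF assms(2)] border_index unfolding mem_K by blast
  qed (use \<epsilon>\<delta> \<open>q \<in> K\<close> in auto)
  then show False
    using stable_motif_real_eigenvalue_pos[OF stable M] by fastforce
qed

end
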